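(* Let $1\le k<n$ and let $\varphi$ be an upper semi-continuous function on a bounded domain $U\times D\subset\mathbb{C}^{n-k}_{w'}\times\mathbb{C}^k_{w''}$. Assume that $\mathcal{I}(\varphi)=\mathcal{O}$. Then almost every $z''\in D$ has the following property: for every relatively compact open subset $V\Subset U$ and every nonnegative function $P\in C^0(\overline{V}\times D)$, \[ \int_V P(w',z'')e^{-\varphi(w',z'')}\,d\lambda_{n-k}(w')<+\infty \] and \[ \lim_{\varepsilon\to0}\frac{1}{\lambda_k(\mathbb{B}^k_{z''}(\varepsilon))}\int_{\mathbb{B}^k_{z''}(\varepsilon)}\int_V P(w',w'')\,\bigl|e^{-\varphi(w',w'')}-e^{-\varphi(w',z'')}\bigr|\,d\lambda_{n-k}(w')\,d\lambda_k(w'')=0. \]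
   Context: $\lambda_m$ is Lebesgue measure on $\mathbb{C}^m$, $\mathbb{B}^k_{z''}(\varepsilon)=\{w''\in\mathbb{C}^k:|w''-z''|<\varepsilon\}$. The multiplier ideal sheaf has stalks $\mathcal{I}(\varphi)_x=\{u\in\mathcal{O}_x:|u|^2e^{-\varphi}$ integrable on a neighborhood of $x\}$; $\mathcal{I}(\varphi)=\mathcal{O}$ means $e^{-\varphi}$ is locally integrable on $U\times D$. *)

theory Defs
  imports "HOL-Analysis.Analysis"
begin

text \<open>Upper semicontinuity of an extended-real valued function on a set S
  (values in [-infinity, +infinity) are required separately).\<close>
definition usc_on :: "'a::topological_space set \<Rightarrow> ('a \<Rightarrow> ereal) \<Rightarrow> bool" where
  "usc_on S f \<longleftrightarrow> (\<forall>x\<in>S. \<forall>c. f x < c \<longrightarrow> (\<forall>\<^sub>F y in at x within S. f y < c))"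

definition expneg :: "ereal \<Rightarrow> ennreal" where
  "expneg t = (if t = \<infinity> then 0 else if t = - \<infinity> then \<infinity> else ennreal (exp (- real_of_ereal t)))"

text \<open>|a - b| for values in [0, +infinity] (equals the usual value when both are finite,
  and +infinity when exactly one is infinite).\<close>
definition ediff :: "ennreal \<Rightarrow> ennreal \<Rightarrow> ennreal" where
  "ediff a b = (a - b) + (b - a)"

definition rel_compact_open :: "'a::metric_space set \<Rightarrow> 'a set \<Rightarrow> bool" where
  "rel_compact_open V U \<longleftrightarrow> open V \<and> compact (closure V) \<and> closure V \<subseteq> U"

text \<open>Multiplier ideal sheaf is trivial (I(phi) = O): e^{-phi} is locally integrable on S.\<close>
definition multiplier_ideal_trivial :: "'a::euclidean_space set \<Rightarrow> ('a \<Rightarrow> ereal) \<Rightarrow> bool" where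
  "multiplier_ideal_trivial S \<phi> \<longleftrightarrow>
     (\<forall>x\<in>S. \<exists>N. open N \<and> x \<in> N \<and> N \<subseteq> S \<and>
        (\<integral>\<^sup>+ y. indicator N y * expneg (\<phi> y) \<partial>lborel) < \<infinity>)"

end

theory Submission
  imports Defs
begin

text \<open>
  The core is a Lebesgue point theorem for slices: if g is integrable on \<open>\<real>\<^sup>a \<times> \<real>\<^sup>b\<close>,
  then for almost every z the average over \<open>y \<in> B(z, \<epsilon>)\<close> of the L1-distance between the
  slices \<open>g(-, y)\<close> and \<open>g(-, z)\<close> tends to 0. For continuous compactly supported g this is
  uniform continuity. A general g is approximated in L1 by such functions h, and the points where
  the error cannot be controlled lie where the slice distance r between g and h, or its maximal
  function, is large; by Markov's inequality and the weak type (1,1) bound for the maximal function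
  (Vitali's covering lemma) these sets have measure \<open>O(\<parallel>g - h\<parallel>\<^sub>1)\<close>.

  The theorem follows by applying this to \<open>e\<^sup>-\<^sup>\<phi>\<close> on products of compact sets exhausting U and
  D: there \<open>e\<^sup>-\<^sup>\<phi>\<close> is integrable because \<open>\<I>(\<phi>) = \<O>\<close>, it is Borel because \<phi> is upper
  semicontinuous, and the continuous weight P is bounded.
\<close>

section \<open>Balls, maximal functions and null sets\<close>

lemma borel_ball [measurable]: "ball c r \<in> sets borel"
  by simp

lemma emeasure_lborel_ball_pos:
  fixes c :: "'a::euclidean_space"
  assumes "0 < r"
  shows "0 < emeasure lborel (ball c r)"
  using assms by (simp add: emeasure_ball)

lemma emeasure_lborel_ball_scale:
  fixes c :: "'a::euclidean_space"
  assumes "0 \<le> r" "0 \<le> t"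
  shows "emeasure lborel (ball c (t * r)) = ennreal (t ^ DIM('a)) * emeasure lborel (ball c r)"
  using assms by (simp add: emeasure_ball ennreal_mult[symmetric] power_mult_distrib mult_ac)

lemma nn_integral_count_space_ge:
  assumes "j \<in> I"
  shows "f j \<le> (\<integral>\<^sup>+i. f i \<partial>count_space I)"
proof -
  have "f j = (\<integral>\<^sup>+i. f i * indicator {j} i \<partial>count_space I)"
    using assms by (subst nn_integral_indicator_singleton) (auto simp: emeasure_count_space)
  also have "\<dots> \<le> (\<integral>\<^sup>+i. f i \<partial>count_space I)"
    by (intro nn_integral_mono) (auto split: split_indicator)
  finally show ?thesis .
qed

lemma emeasure_UN_countable_le:
  assumes "countable I" and [measurable]: "\<And>i. i \<in> I \<Longrightarrow> X i \<in> sets M"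
  shows "emeasure M (\<Union>i\<in>I. X i) \<le> (\<integral>\<^sup>+i. emeasure M (X i) \<partial>count_space I)"
proof -
  have "emeasure M (\<Union>i\<in>I. X i) = (\<integral>\<^sup>+x. indicator (\<Union>i\<in>I. X i) x \<partial>M)"
    using assms by (intro nn_integral_indicator[symmetric] sets.countable_UN') auto
  also have "\<dots> \<le> (\<integral>\<^sup>+x. (\<integral>\<^sup>+i. indicator (X i) x \<partial>count_space I) \<partial>M)"
  proof (intro nn_integral_mono)
    fix x
    show "indicator (\<Union>i\<in>I. X i) x \<le> (\<integral>\<^sup>+i. indicator (X i) x \<partial>count_space I)"
      using nn_integral_count_space_ge[of _ I "\<lambda>i. indicator (X i) x"] by (force split: split_indicator)
  qed
  also have "\<dots> = (\<integral>\<^sup>+i. emeasure M (X i) \<partial>count_space I)"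
    using assms by (subst nn_integral_count_space_nn_integral) (auto intro!: nn_integral_cong)
  finally show ?thesis .
qed

text \<open>
  Only radii below 1 occur: small balls are all that matter for Lebesgue points, and bounded radii
  are what Vitali's covering lemma needs.
\<close>

lemma maximal_function_weak_type:
  fixes r :: "'a::euclidean_space \<Rightarrow> ennreal"
  assumes [measurable]: "r \<in> borel_measurable borel" and "0 < s"
  obtains T where "open T"
    "{z. \<exists>\<epsilon>\<in>{0<..<1}. ennreal s * emeasure lborel (ball z \<epsilon>)
        < (\<integral>\<^sup>+y. indicator (ball z \<epsilon>) y * r y \<partial>lborel)} \<subseteq> T"
    "emeasure lborel T \<le> ennreal (5 ^ DIM('a) / s) * (\<integral>\<^sup>+y. r y \<partial>lborel)"
proof -
  let ?I = "\<lambda>i. \<integral>\<^sup>+y. indicator (ball (fst i) (snd i)) y * r y \<partial>lborel"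
  let ?c = "ennreal (5 ^ DIM('a) / s)"
  define K where "K = {i. snd i \<in> {0<..<1} \<and> ennreal s * emeasure lborel (ball (fst i) (snd i)) < ?I i}"
  obtain C where C: "countable C" "C \<subseteq> K"
    and disj: "pairwise (\<lambda>i j. disjnt (ball (fst i) (snd i)) (ball (fst j) (snd j))) C"
    and cover: "(\<Union>i\<in>K. ball (fst i) (snd i)) \<subseteq> (\<Union>i\<in>C. ball (fst i) (5 * snd i))"
    by (rule Vitali_covering_lemma_balls[where K=K and a=fst and r=snd and B=1]) (auto simp: K_def)
  have "emeasure lborel (\<Union>i\<in>C. ball (fst i) (5 * snd i))
      \<le> (\<integral>\<^sup>+i. emeasure lborel (ball (fst i) (5 * snd i)) \<partial>count_space C)"
    using C(1) by (rule emeasure_UN_countable_le) simp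
  also have "\<dots> \<le> (\<integral>\<^sup>+i. ?c * ?I i \<partial>count_space C)"
  proof (intro nn_integral_mono)
    fix i assume "i \<in> space (count_space C)"
    then have "0 < snd i" and small: "ennreal s * emeasure lborel (ball (fst i) (snd i)) < ?I i"
      using C(2) by (auto simp: K_def)
    have "emeasure lborel (ball (fst i) (5 * snd i))
        = ?c * (ennreal s * emeasure lborel (ball (fst i) (snd i)))"
      using \<open>0 < snd i\<close> \<open>0 < s\<close>
      by (simp add: emeasure_lborel_ball_scale mult.assoc[symmetric] ennreal_mult[symmetric])
    also have "\<dots> \<le> ?c * ?I i"
      using small by (intro mult_left_mono) auto
    finally show "emeasure lborel (ball (fst i) (5 * snd i)) \<le> ?c * ?I i" .
  qed
  also have "\<dots> = ?c * (\<integral>\<^sup>+y. (\<integral>\<^sup>+i. indicator (ball (fst i) (snd i)) y * r y \<partial>count_space C) \<partial>lborel)"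
    using C(1) by (simp add: nn_integral_cmult nn_integral_count_space_nn_integral)
  also have "\<dots> \<le> ?c * (\<integral>\<^sup>+y. r y \<partial>lborel)"
  proof (intro mult_left_mono nn_integral_mono)
    fix y
    have "(\<integral>\<^sup>+i. indicator (ball (fst i) (snd i)) y * r y \<partial>count_space C)
        = (\<integral>\<^sup>+i. of_bool (y \<in> ball (fst i) (snd i)) \<partial>count_space C) * r y"
      by (subst nn_integral_multc[symmetric]) (auto simp: indicator_def intro!: nn_integral_cong)
    also have "(\<integral>\<^sup>+i. of_bool (y \<in> ball (fst i) (snd i)) \<partial>count_space C)
        = of_bool (\<exists>i\<in>C. y \<in> ball (fst i) (snd i))"
      using disj unfolding pairwise_def disjnt_def by (intro of_bool_Bex_eq_nn_integral[symmetric]) blast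
    finally show "(\<integral>\<^sup>+i. indicator (ball (fst i) (snd i)) y * r y \<partial>count_space C) \<le> r y"
      by simp
  qed simp
  finally have measure_bound: "emeasure lborel (\<Union>i\<in>C. ball (fst i) (5 * snd i)) \<le> ?c * (\<integral>\<^sup>+y. r y \<partial>lborel)" .
  have covered: "{z. \<exists>\<epsilon>\<in>{0<..<1}. ennreal s * emeasure lborel (ball z \<epsilon>)
        < (\<integral>\<^sup>+y. indicator (ball z \<epsilon>) y * r y \<partial>lborel)} \<subseteq> (\<Union>i\<in>C. ball (fst i) (5 * snd i))"
  proof
    fix z assume "z \<in> {z. \<exists>\<epsilon>\<in>{0<..<1}. ennreal s * emeasure lborel (ball z \<epsilon>)
        < (\<integral>\<^sup>+y. indicator (ball z \<epsilon>) y * r y \<partial>lborel)}"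
    then obtain \<epsilon> where "(z, \<epsilon>) \<in> K"
      by (auto simp: K_def)
    then have "z \<in> (\<Union>i\<in>K. ball (fst i) (snd i))"
      by (intro UN_I[of "(z, \<epsilon>)"]) (auto simp: K_def)
    then show "z \<in> (\<Union>i\<in>C. ball (fst i) (5 * snd i))"
      using cover by blast
  qed
  show ?thesis
    by (rule that[OF _ covered measure_bound]) (intro open_UN; simp)
qed

lemma AE_I_small_covers:
  assumes "\<And>e. 0 < e \<Longrightarrow> \<exists>T\<in>sets M. {x\<in>space M. \<not> P x} \<subseteq> T \<and> emeasure M T \<le> ennreal e"
  shows "AE x in M. P x"
proof -
  have "\<forall>n. \<exists>T\<in>sets M. {x\<in>space M. \<not> P x} \<subseteq> T \<and> emeasure M T \<le> ennreal (1 / Suc n)"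
    using assms by simp
  then obtain T where T: "\<And>n. T n \<in> sets M" "\<And>n. {x\<in>space M. \<not> P x} \<subseteq> T n"
    "\<And>n. emeasure M (T n) \<le> ennreal (1 / Suc n)"
    by metis
  have "emeasure M (\<Inter>n. T n) \<le> 0"
  proof (rule ennreal_le_epsilon)
    fix e :: real assume "0 < e"
    then obtain n where n: "1 / Suc n < e"
      using nat_approx_posE by blast
    have "emeasure M (\<Inter>n. T n) \<le> emeasure M (T n)"
      using T(1) by (intro emeasure_mono) auto
    also have "\<dots> \<le> ennreal e"
      using n by (intro order.trans[OF T(3)[of n]] ennreal_leI) simp
    finally show "emeasure M (\<Inter>n. T n) \<le> 0 + ennreal e" by simp
  qed
  then have "(\<Inter>n. T n) \<in> null_sets M"
    using T(1) by (auto simp: null_sets_def)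
  then show ?thesis
    using T(2) by (intro AE_I'[of "\<Inter>n. T n"]) auto
qed

lemma tendsto_zero_ennreal_if_eventually_le:
  fixes f :: "'a \<Rightarrow> ennreal"
  assumes "\<And>n. \<forall>\<^sub>F x in F. f x \<le> ennreal (1 / Suc n)"
  shows "(f \<longlongrightarrow> 0) F"
proof (rule order_tendstoI)
  fix a :: ennreal assume "0 < a"
  then obtain n where n: "ennreal (1 / Suc n) < a"
  proof (cases a)
    case (real r)
    then obtain n where "1 / Suc n < r"
      using \<open>0 < a\<close> nat_approx_posE by fastforce
    then show ?thesis
      using real by (intro that[of n]) (simp add: ennreal_less_iff)
  qed (use that in auto)
  show "\<forall>\<^sub>F x in F. f x < a"
    using assms[of n] by (rule eventually_mono) (erule le_less_trans[OF _ n])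
qed simp

section \<open>Approximation in L1 by continuous functions\<close>

definition L1_dist :: "('a::euclidean_space \<Rightarrow> real) \<Rightarrow> ('a \<Rightarrow> real) \<Rightarrow> ennreal" where
  "L1_dist f g = (\<integral>\<^sup>+x. ennreal \<bar>f x - g x\<bar> \<partial>lborel)"

lemma L1_dist_commute: "L1_dist f g = L1_dist g f"
  by (simp add: L1_dist_def abs_minus_commute)

lemma L1_dist_triangle:
  assumes [measurable]: "f \<in> borel_measurable borel" "g \<in> borel_measurable borel"
    "h \<in> borel_measurable borel"
  shows "L1_dist f h \<le> L1_dist f g + L1_dist g h"
proof -
  have "L1_dist f h \<le> (\<integral>\<^sup>+x. ennreal \<bar>f x - g x\<bar> + ennreal \<bar>g x - h x\<bar> \<partial>lborel)"
    unfolding L1_dist_def by (intro nn_integral_mono) (simp flip: ennreal_plus add: ennreal_leI)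
  also have "\<dots> = L1_dist f g + L1_dist g h"
    unfolding L1_dist_def by (intro nn_integral_add) auto
  finally show ?thesis .
qed

lemma L1_dist_add_le:
  assumes [measurable]: "f \<in> borel_measurable borel" "f' \<in> borel_measurable borel"
    "g \<in> borel_measurable borel" "g' \<in> borel_measurable borel"
  shows "L1_dist (\<lambda>x. f x + g x) (\<lambda>x. f' x + g' x) \<le> L1_dist f f' + L1_dist g g'"
proof -
  have "L1_dist (\<lambda>x. f x + g x) (\<lambda>x. f' x + g' x)
      \<le> (\<integral>\<^sup>+x. ennreal \<bar>f x - f' x\<bar> + ennreal \<bar>g x - g' x\<bar> \<partial>lborel)"
    unfolding L1_dist_def by (intro nn_integral_mono) (simp flip: ennreal_plus add: ennreal_leI)
  also have "\<dots> = L1_dist f f' + L1_dist g g'"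
    unfolding L1_dist_def by (intro nn_integral_add) auto
  finally show ?thesis .
qed

lemma L1_dist_cmult:
  assumes [measurable]: "f \<in> borel_measurable borel" "g \<in> borel_measurable borel"
  shows "L1_dist (\<lambda>x. c * f x) (\<lambda>x. c * g x) = ennreal \<bar>c\<bar> * L1_dist f g"
  unfolding L1_dist_def
  by (subst nn_integral_cmult[symmetric])
     (auto simp: ennreal_mult[symmetric] abs_mult right_diff_distrib[symmetric])

definition Cc_ball :: "real \<Rightarrow> ('a::euclidean_space \<Rightarrow> real) set" where
  "Cc_ball R = {h. continuous_on UNIV h \<and> (\<forall>x. x \<notin> ball 0 R \<longrightarrow> h x = 0)}"

lemma Cc_ball_borel: "h \<in> Cc_ball R \<Longrightarrow> h \<in> borel_measurable borel"
  by (simp add: Cc_ball_def borel_measurable_continuous_onI)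

definition Cc_approximable :: "real \<Rightarrow> ('a::euclidean_space \<Rightarrow> real) \<Rightarrow> bool" where
  "Cc_approximable R f \<longleftrightarrow> (\<forall>e>0. \<exists>h\<in>Cc_ball R. L1_dist f h < ennreal e)"

lemma Cc_approximable_add:
  assumes [measurable]: "f \<in> borel_measurable borel" "g \<in> borel_measurable borel"
    and "Cc_approximable R f" "Cc_approximable R g"
  shows "Cc_approximable R (\<lambda>x. f x + g x)"
  unfolding Cc_approximable_def
proof (intro allI impI)
  fix e :: real assume "0 < e"
  then obtain h h' where h: "h \<in> Cc_ball R" "L1_dist f h < ennreal (e/2)"
    and h': "h' \<in> Cc_ball R" "L1_dist g h' < ennreal (e/2)"
    using assms(3,4) unfolding Cc_approximable_def by (meson half_gt_zero)
  have [measurable]: "h \<in> borel_measurable borel" "h' \<in> borel_measurable borel"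
    using h h' by (simp_all add: Cc_ball_borel)
  have "L1_dist (\<lambda>x. f x + g x) (\<lambda>x. h x + h' x) \<le> L1_dist f h + L1_dist g h'"
    by (rule L1_dist_add_le) measurable
  also have "\<dots> < ennreal (e/2) + ennreal (e/2)"
    using h(2) h'(2) by (rule add_strict_mono)
  also have "\<dots> = ennreal e"
    using \<open>0 < e\<close> by (simp flip: ennreal_plus)
  finally have "L1_dist (\<lambda>x. f x + g x) (\<lambda>x. h x + h' x) < ennreal e" .
  moreover have "(\<lambda>x. h x + h' x) \<in> Cc_ball R"
    using h h' by (auto simp: Cc_ball_def intro: continuous_on_add)
  ultimately show "\<exists>h\<in>Cc_ball R. L1_dist (\<lambda>x. f x + g x) h < ennreal e"
    by blast
qed

lemma Cc_approximable_cmult: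
  assumes [measurable]: "f \<in> borel_measurable borel" and "Cc_approximable R f"
  shows "Cc_approximable R (\<lambda>x. c * f x)"
  unfolding Cc_approximable_def
proof (intro allI impI)
  fix e :: real assume "0 < e"
  then obtain h where h: "h \<in> Cc_ball R" "L1_dist f h < ennreal (e / (\<bar>c\<bar> + 1))"
    using assms(2) unfolding Cc_approximable_def
    by (metis abs_ge_zero add_nonneg_pos divide_pos_pos zero_less_one)
  have "L1_dist (\<lambda>x. c * f x) (\<lambda>x. c * h x) = ennreal \<bar>c\<bar> * L1_dist f h"
    using h by (intro L1_dist_cmult) (simp_all add: Cc_ball_borel)
  also have "\<dots> \<le> ennreal \<bar>c\<bar> * ennreal (e / (\<bar>c\<bar> + 1))"
    using h by (intro mult_left_mono) auto
  also have "\<dots> < ennreal e"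
  proof -
    have "\<bar>c\<bar> * (e / (\<bar>c\<bar> + 1)) < e"
      using \<open>0 < e\<close> by (simp add: field_simps)
    then show ?thesis
      using \<open>0 < e\<close> by (simp add: ennreal_mult[symmetric] ennreal_less_iff)
  qed
  finally have "L1_dist (\<lambda>x. c * f x) (\<lambda>x. c * h x) < ennreal e" .
  moreover have "(\<lambda>x. c * h x) \<in> Cc_ball R"
    using h by (auto simp: Cc_ball_def intro: continuous_on_mult_left)
  ultimately show "\<exists>h\<in>Cc_ball R. L1_dist (\<lambda>x. c * f x) h < ennreal e"
    by blast
qed

lemma Cc_approximable_sum:
  assumes "finite I" "\<And>i. i \<in> I \<Longrightarrow> f i \<in> borel_measurable borel"
    "\<And>i. i \<in> I \<Longrightarrow> Cc_approximable R (f i)"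
  shows "Cc_approximable R (\<lambda>x. \<Sum>i\<in>I. f i x)"
  using assms
proof (induction I rule: finite_induct)
  case empty
  have "(\<lambda>x. 0) \<in> Cc_ball R"
    by (simp add: Cc_ball_def)
  then show ?case
    unfolding Cc_approximable_def L1_dist_def by force
next
  case (insert i I)
  then show ?case
    by (simp add: Cc_approximable_add borel_measurable_sum)
qed

lemma Cc_approximable_limit:
  assumes [measurable]: "f \<in> borel_measurable borel"
    and "\<And>e. 0 < e \<Longrightarrow> \<exists>g\<in>borel_measurable borel. Cc_approximable R g \<and> L1_dist f g < ennreal e"
  shows "Cc_approximable R f"
  unfolding Cc_approximable_def
proof (intro allI impI)
  fix e :: real assume "0 < e"
  then obtain g where [measurable]: "g \<in> borel_measurable borel"
    and g: "Cc_approximable R g" "L1_dist f g < ennreal (e/2)"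
    using assms(2) half_gt_zero by blast
  then obtain h where h: "h \<in> Cc_ball R" "L1_dist g h < ennreal (e/2)"
    using \<open>0 < e\<close> unfolding Cc_approximable_def by (meson half_gt_zero)
  have [measurable]: "h \<in> borel_measurable borel"
    using h(1) by (rule Cc_ball_borel)
  have "L1_dist f h \<le> L1_dist f g + L1_dist g h"
    by (rule L1_dist_triangle) measurable
  also have "\<dots> < ennreal (e/2) + ennreal (e/2)"
    using g(2) h(2) by (rule add_strict_mono)
  also have "\<dots> = ennreal e"
    using \<open>0 < e\<close> by (simp flip: ennreal_plus)
  finally show "\<exists>h\<in>Cc_ball R. L1_dist f h < ennreal e"
    using h(1) by blast
qed

lemma Cc_approximable_indicator:
  fixes A :: "'a::euclidean_space set"
  assumes A: "A \<in> sets borel" "A \<subseteq> ball 0 R"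
  shows "Cc_approximable R (indicator A)"
  unfolding Cc_approximable_def
proof (intro allI impI)
  fix e :: real assume "0 < e"
  then obtain U where U: "open U" "A \<subseteq> U" "emeasure lborel (U - A) < e/2"
    using outer_regular_lborel[OF A(1), of "e/2"] by auto
  obtain V where V: "open V" "-A \<subseteq> V" "emeasure lborel (V - -A) < e/2"
    using outer_regular_lborel[of "-A" "e/2"] A(1) \<open>0 < e\<close> by auto
  have "closed (-V)" "closed (-(U \<inter> ball 0 R))" "-V \<inter> -(U \<inter> ball 0 R) = {}"
    using U V A by auto
  then obtain h :: "'a \<Rightarrow> real" where h: "continuous_on UNIV h" "\<And>x. h x \<in> closed_segment 1 0"
    "\<And>x. x \<in> -V \<Longrightarrow> h x = 1" "\<And>x. x \<in> -(U \<inter> ball 0 R) \<Longrightarrow> h x = 0"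
    by (rule Urysohn[where a=1 and b=0]) blast
  have "ennreal \<bar>indicator A x - h x\<bar> \<le> indicator ((U - A) \<union> (V - -A)) x" for x
    using h(2)[of x] h(3)[of x] h(4)[of x] by (auto simp: indicator_def closed_segment_eq_real_ivl)
  then have "L1_dist (indicator A) h \<le> (\<integral>\<^sup>+x. indicator ((U - A) \<union> (V - -A)) x \<partial>lborel)"
    unfolding L1_dist_def by (rule nn_integral_mono)
  also have "\<dots> \<le> emeasure lborel (U - A) + emeasure lborel (V - -A)"
    using U V A by (simp add: emeasure_subadditive)
  also have "\<dots> < ennreal (e/2) + ennreal (e/2)"
    using U(3) V(3) by (rule add_strict_mono)
  also have "\<dots> = ennreal e"
    using \<open>0 < e\<close> by (simp flip: ennreal_plus)
  finally have "L1_dist (indicator A) h < ennreal e" .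
  moreover have "h \<in> Cc_ball R"
    using h(1,4) by (simp add: Cc_ball_def)
  ultimately show "\<exists>h\<in>Cc_ball R. L1_dist (indicator A) h < ennreal e"
    by blast
qed

lemma Cc_approximable_simple:
  fixes s :: "'a::euclidean_space \<Rightarrow> real"
  assumes [measurable]: "s \<in> borel_measurable borel" and "finite (range s)"
    and "\<And>x. x \<notin> ball 0 R \<Longrightarrow> s x = 0"
  shows "Cc_approximable R s"
proof -
  define A where "A v = {x \<in> ball 0 R. s x = v}" for v
  have A_borel [measurable]: "A v \<in> sets borel" for v
    unfolding A_def by measurable
  have "s = (\<lambda>x. \<Sum>v\<in>range s. v * indicator (A v) x)"
  proof
    fix x
    have "(\<Sum>v\<in>range s. v * indicator (A v) x)
        = (\<Sum>v\<in>range s. if v = s x then s x * indicator (ball 0 R) x else 0)"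
      by (intro sum.cong) (auto simp: A_def indicator_def)
    also have "\<dots> = s x"
      using assms(2,3) by (auto simp: indicator_def)
    finally show "s x = (\<Sum>v\<in>range s. v * indicator (A v) x)"
      by simp
  qed
  moreover have "Cc_approximable R (\<lambda>x. \<Sum>v\<in>range s. v * indicator (A v) x)"
  proof (rule Cc_approximable_sum[OF assms(2)])
    fix v
    have "Cc_approximable R (indicator (A v))"
      by (rule Cc_approximable_indicator) (auto simp: A_def)
    then show "Cc_approximable R (\<lambda>x. v * indicator (A v) x)"
      by (rule Cc_approximable_cmult[rotated]) measurable
  qed measurable
  ultimately show ?thesis
    by simp
qed

lemma Cc_approximable_integrable:
  fixes g :: "'a::euclidean_space \<Rightarrow> real"
  assumes [measurable]: "g \<in> borel_measurable borel" and g_nonneg: "\<And>x. 0 \<le> g x"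
    and g_supp: "\<And>x. x \<notin> ball 0 R \<Longrightarrow> g x = 0"
    and g_int: "(\<integral>\<^sup>+x. ennreal (g x) \<partial>lborel) < \<infinity>"
  shows "Cc_approximable R g"
proof (rule Cc_approximable_limit)
  show "g \<in> borel_measurable borel"
    by fact
next
  fix e :: real assume "0 < e"
  obtain f where f: "\<And>i. simple_function lborel (f i)" "incseq f" "\<And>i x. f i x < top"
    "\<And>x. (SUP i. f i x) = ennreal (g x)"
    by (rule borel_measurable_implies_simple_function_sequence'[of "\<lambda>x. ennreal (g x)" lborel]) auto
  have [measurable]: "f i \<in> borel_measurable borel" for i
    using borel_measurable_simple_function[OF f(1)] by simp
  have f_le: "f i x \<le> ennreal (g x)" for i x
    using f(4)[of x] by (metis SUP_upper UNIV_I)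
  have "(\<integral>\<^sup>+x. ennreal (g x) \<partial>lborel) < (\<integral>\<^sup>+x. ennreal (g x) \<partial>lborel) + ennreal e"
    using g_int \<open>0 < e\<close> by (simp add: ennreal_add_left_cancel_less[of _ 0, simplified])
  also have "\<dots> = (SUP i. integral\<^sup>N lborel (f i) + ennreal e)"
    using nn_integral_monotone_convergence_SUP[OF f(2)] f(4) by (simp add: ennreal_SUP_add_left)
  finally obtain i where i: "(\<integral>\<^sup>+x. ennreal (g x) \<partial>lborel) < integral\<^sup>N lborel (f i) + ennreal e"
    by (auto simp: less_SUP_iff)
  have fin: "integral\<^sup>N lborel (f i) < \<infinity>"
    using g_int f_le by (meson le_less_trans nn_integral_mono)
  define s where "s x = enn2real (f i x)" for x
  have s_borel [measurable]: "s \<in> borel_measurable borel"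
    unfolding s_def by measurable
  have s_nonneg: "0 \<le> s x" for x
    by (simp add: s_def)
  have f_eq: "f i x = ennreal (s x)" for x
    using f(3)[of i x] by (simp add: s_def less_top)
  have s_le: "s x \<le> g x" for x
    using f_le[of i x] g_nonneg[of x] by (simp add: f_eq ennreal_le_iff)
  have "Cc_approximable R s"
  proof (rule Cc_approximable_simple)
    show "finite (range s)"
    proof -
      have "range s = enn2real ` range (f i)"
        by (auto simp: s_def)
      then show ?thesis
        using simple_functionD(1)[OF f(1)[of i]] by simp
    qed
    show "s x = 0" if "x \<notin> ball 0 R" for x
      using s_le[of x] g_supp[OF that] enn2real_nonneg[of "f i x"] unfolding s_def by linarith
  qed (fact s_borel)
  moreover have "L1_dist g s < ennreal e"
  proof -
    have "L1_dist g s = (\<integral>\<^sup>+x. ennreal (g x) - f i x \<partial>lborel)"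
      unfolding L1_dist_def using s_le
      by (intro nn_integral_cong) (simp add: f_eq ennreal_minus s_nonneg)
    also have "\<dots> = (\<integral>\<^sup>+x. ennreal (g x) \<partial>lborel) - integral\<^sup>N lborel (f i)"
      using fin f_le by (intro nn_integral_diff) auto
    also have "\<dots> < ennreal e"
      using i fin f_le by (subst minus_less_iff_ennreal) (auto simp: add.commute intro: nn_integral_mono)
    finally show ?thesis .
  qed
  ultimately show "\<exists>s\<in>borel_measurable borel. Cc_approximable R s \<and> L1_dist g s < ennreal e"
    by auto
qed

section \<open>Lebesgue points of slices\<close>

definition ball_average :: "('a::euclidean_space \<Rightarrow> ennreal) \<Rightarrow> 'a \<Rightarrow> real \<Rightarrow> ennreal" where
  "ball_average f z \<epsilon> = (\<integral>\<^sup>+y. indicator (ball z \<epsilon>) y * f y \<partial>lborel) / emeasure lborel (ball z \<epsilon>)"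

lemma ball_average_le:
  assumes "0 < \<epsilon>"
    and "(\<integral>\<^sup>+y. indicator (ball z \<epsilon>) y * f y \<partial>lborel) \<le> c * emeasure lborel (ball z \<epsilon>)"
  shows "ball_average f z \<epsilon> \<le> c"
  using assms emeasure_lborel_ball_pos[of \<epsilon> z]
  by (simp add: ball_average_def divide_le_posI_ennreal mult.commute)

lemma ball_average_mono_AE:
  assumes "AE y in lborel. y \<in> ball z \<epsilon> \<longrightarrow> f y \<le> g y"
  shows "ball_average f z \<epsilon> \<le> ball_average g z \<epsilon>"
proof -
  have "AE y in lborel. indicator (ball z \<epsilon>) y * f y \<le> indicator (ball z \<epsilon>) y * g y"
    using assms by eventually_elim (auto split: split_indicator)
  then show ?thesis
    unfolding ball_average_def by (rule divide_right_mono_ennreal[OF nn_integral_mono_AE])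
qed

lemma ball_average_cmult:
  assumes "f \<in> borel_measurable lborel"
  shows "ball_average (\<lambda>y. c * f y) z \<epsilon> = c * ball_average f z \<epsilon>"
proof -
  have "(\<integral>\<^sup>+y. indicator (ball z \<epsilon>) y * (c * f y) \<partial>lborel) = c * (\<integral>\<^sup>+y. indicator (ball z \<epsilon>) y * f y \<partial>lborel)"
    using assms by (subst nn_integral_cmult[symmetric]) (auto simp: mult.left_commute)
  then show ?thesis
    by (simp add: ball_average_def ennreal_times_divide)
qed

lemma Cc_ball_slice_continuous:
  fixes h :: "'a::euclidean_space \<times> 'b::euclidean_space \<Rightarrow> real"
  assumes h: "h \<in> Cc_ball R" and "0 < \<eta>"
  obtains d where "0 < d" "\<And>y. dist y z < d \<Longrightarrow> L1_dist (\<lambda>x. h (x, y)) (\<lambda>x. h (x, z)) \<le> ennreal \<eta>"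
proof -
  define S where "S = cball (0::'a \<times> 'b) (R + norm z + 1)"
  define c where "c = measure lborel (ball (0::'a) R)"
  have "0 \<le> c"
    by (simp add: c_def)
  have "uniformly_continuous_on S h"
    using h unfolding S_def Cc_ball_def
    by (intro compact_uniformly_continuous[OF continuous_on_subset[OF _ subset_UNIV]]) auto
  moreover have "0 < \<eta> / (c + 1)"
    using \<open>0 < \<eta>\<close> \<open>0 \<le> c\<close> by simp
  ultimately obtain d0 where "0 < d0"
    and d0: "\<And>p q. p \<in> S \<Longrightarrow> q \<in> S \<Longrightarrow> dist q p < d0 \<Longrightarrow> dist (h q) (h p) < \<eta> / (c + 1)"
    unfolding uniformly_continuous_on_def by metis
  show ?thesis
  proof (rule that[of "min d0 1"])
    show "0 < min d0 1"
      using \<open>0 < d0\<close> by simp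
    fix y assume y: "dist y z < min d0 1"
    have pointwise: "ennreal \<bar>h (x, y) - h (x, z)\<bar> \<le> ennreal (\<eta> / (c + 1)) * indicator (ball 0 R) x" for x
    proof (cases "x \<in> ball 0 R")
      case False
      then have "(x, y) \<notin> ball 0 R" "(x, z) \<notin> ball 0 R"
        using norm_fst_le[of x y] norm_fst_le[of x z] by auto
      then show ?thesis
        using h by (simp add: Cc_ball_def)
    next
      case True
      have "norm y \<le> norm z + 1"
        using y norm_triangle_ineq2[of y z] by (auto simp: dist_norm)
      then have "(x, y) \<in> S" "(x, z) \<in> S"
        using True norm_Pair_le[of x y] norm_Pair_le[of x z] by (auto simp: S_def)
      moreover have "dist (x, y) (x, z) < d0"
        using y by (simp add: dist_Pair_Pair)
      ultimately have "dist (h (x, y)) (h (x, z)) < \<eta> / (c + 1)"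
        using d0 by blast
      then show ?thesis
        using True by (simp add: dist_real_def)
    qed
    have "L1_dist (\<lambda>x. h (x, y)) (\<lambda>x. h (x, z))
        \<le> (\<integral>\<^sup>+x. ennreal (\<eta> / (c + 1)) * indicator (ball (0::'a) R) x \<partial>lborel)"
      unfolding L1_dist_def by (intro nn_integral_mono pointwise)
    also have "\<dots> = ennreal (\<eta> / (c + 1)) * ennreal c"
      using emeasure_lborel_ball_finite[of "0::'a" R]
      by (simp add: nn_integral_cmult_indicator c_def emeasure_eq_ennreal_measure)
    also have "\<dots> = ennreal (\<eta> / (c + 1) * c)"
      using \<open>0 < \<eta>\<close> \<open>0 \<le> c\<close> by (intro ennreal_mult[symmetric]) auto
    also have "\<dots> \<le> ennreal \<eta>"
      using \<open>0 < \<eta>\<close> \<open>0 \<le> c\<close> by (intro ennreal_leI) (simp add: field_simps)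
    finally show "L1_dist (\<lambda>x. h (x, y)) (\<lambda>x. h (x, z)) \<le> ennreal \<eta>" .
  qed
qed

lemma slice_oscillation_eventually_le:
  fixes g h :: "'a::euclidean_space \<times> 'b::euclidean_space \<Rightarrow> real"
  assumes [measurable]: "g \<in> borel_measurable borel" and h: "h \<in> Cc_ball R" and "0 < t"
    and close_at_z: "L1_dist (\<lambda>x. g (x, z)) (\<lambda>x. h (x, z)) \<le> ennreal t"
    and close_near_z: "\<And>\<epsilon>. \<epsilon> \<in> {0<..<1} \<Longrightarrow>
      (\<integral>\<^sup>+y. indicator (ball z \<epsilon>) y * L1_dist (\<lambda>x. g (x, y)) (\<lambda>x. h (x, y)) \<partial>lborel)
        \<le> ennreal t * emeasure lborel (ball z \<epsilon>)"
  shows "\<forall>\<^sub>F \<epsilon> in at_right 0.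
    ball_average (\<lambda>y. L1_dist (\<lambda>x. g (x, y)) (\<lambda>x. g (x, z))) z \<epsilon> \<le> ennreal (3 * t)"
proof -
  have [measurable]: "h \<in> borel_measurable borel"
    using h by (rule Cc_ball_borel)
  have [measurable]: "g \<in> borel_measurable (lborel \<Otimes>\<^sub>M lborel)" "h \<in> borel_measurable (lborel \<Otimes>\<^sub>M lborel)"
    by (simp_all add: lborel_prod)
  let ?r = "\<lambda>y. L1_dist (\<lambda>x. g (x, y)) (\<lambda>x. h (x, y))"
  have [measurable]: "?r \<in> borel_measurable lborel"
    unfolding L1_dist_def by measurable
  obtain d where "0 < d" and d: "\<And>y. dist y z < d \<Longrightarrow> L1_dist (\<lambda>x. h (x, y)) (\<lambda>x. h (x, z)) \<le> ennreal t"
    using Cc_ball_slice_continuous[OF h \<open>0 < t\<close>] by blast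
  have "ball_average (\<lambda>y. L1_dist (\<lambda>x. g (x, y)) (\<lambda>x. g (x, z))) z \<epsilon> \<le> ennreal (3 * t)"
    if "0 < \<epsilon>" "\<epsilon> < min d 1" for \<epsilon>
  proof (rule ball_average_le[OF \<open>0 < \<epsilon>\<close>])
    have "indicator (ball z \<epsilon>) y * L1_dist (\<lambda>x. g (x, y)) (\<lambda>x. g (x, z))
        \<le> indicator (ball z \<epsilon>) y * ?r y + ennreal (2 * t) * indicator (ball z \<epsilon>) y" for y
    proof (cases "y \<in> ball z \<epsilon>")
      case True
      then have "dist y z < d"
        using that by (simp add: dist_commute)
      have "L1_dist (\<lambda>x. g (x, y)) (\<lambda>x. g (x, z))
          \<le> ?r y + (L1_dist (\<lambda>x. h (x, y)) (\<lambda>x. h (x, z)) + L1_dist (\<lambda>x. h (x, z)) (\<lambda>x. g (x, z)))"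
        by (intro order.trans[OF L1_dist_triangle[where g="\<lambda>x. h (x, y)"]] add_left_mono
            L1_dist_triangle) measurable
      also have "\<dots> \<le> ?r y + (ennreal t + ennreal t)"
        using d[OF \<open>dist y z < d\<close>] close_at_z by (intro add_mono) (auto simp: L1_dist_commute)
      finally show ?thesis
        using True \<open>0 < t\<close> by (simp flip: ennreal_plus)
    qed simp
    then have "(\<integral>\<^sup>+y. indicator (ball z \<epsilon>) y * L1_dist (\<lambda>x. g (x, y)) (\<lambda>x. g (x, z)) \<partial>lborel)
        \<le> (\<integral>\<^sup>+y. indicator (ball z \<epsilon>) y * ?r y \<partial>lborel) + ennreal (2 * t) * emeasure lborel (ball z \<epsilon>)"
      by (subst nn_integral_cmult_indicator[symmetric]) (auto simp flip: nn_integral_add intro!: nn_integral_mono)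
    also have "\<dots> \<le> ennreal t * emeasure lborel (ball z \<epsilon>) + ennreal (2 * t) * emeasure lborel (ball z \<epsilon>)"
      using close_near_z[of \<epsilon>] that by (intro add_right_mono) auto
    also have "\<dots> = ennreal (3 * t) * emeasure lborel (ball z \<epsilon>)"
      using \<open>0 < t\<close> by (simp add: distrib_right[symmetric] flip: ennreal_plus)
    finally show "(\<integral>\<^sup>+y. indicator (ball z \<epsilon>) y * L1_dist (\<lambda>x. g (x, y)) (\<lambda>x. g (x, z)) \<partial>lborel)
        \<le> ennreal (3 * t) * emeasure lborel (ball z \<epsilon>)" .
  qed
  then show ?thesis
    using \<open>0 < d\<close> unfolding eventually_at_right_field by (intro exI[of _ "min d 1"]) auto
qed

lemma AE_slice_oscillation_le:
  fixes g :: "'a::euclidean_space \<times> 'b::euclidean_space \<Rightarrow> real"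
  assumes [measurable]: "g \<in> borel_measurable borel" and g: "Cc_approximable R g" and "0 < t"
  shows "AE z in lborel. \<forall>\<^sub>F \<epsilon> in at_right 0.
    ball_average (\<lambda>y. L1_dist (\<lambda>x. g (x, y)) (\<lambda>x. g (x, z))) z \<epsilon> \<le> ennreal (3 * t)"
proof (rule AE_I_small_covers)
  fix e :: real assume "0 < e"
  define c where "c = 5 ^ DIM('b) / t + 1 / t"
  have "0 < c"
    using \<open>0 < t\<close> unfolding c_def by (intro add_pos_pos divide_pos_pos) auto
  define \<delta> where "\<delta> = e / c"
  have "0 < \<delta>"
    using \<open>0 < e\<close> \<open>0 < c\<close> by (simp add: \<delta>_def)
  then obtain h where h: "h \<in> Cc_ball R" "L1_dist g h < ennreal \<delta>"
    using g unfolding Cc_approximable_def by blast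
  have [measurable]: "h \<in> borel_measurable borel"
    using h(1) by (rule Cc_ball_borel)
  have [measurable]: "g \<in> borel_measurable (lborel \<Otimes>\<^sub>M lborel)" "h \<in> borel_measurable (lborel \<Otimes>\<^sub>M lborel)"
    by (simp_all add: lborel_prod)
  define r where "r y = L1_dist (\<lambda>x. g (x, y)) (\<lambda>x. h (x, y))" for y
  have r_borel [measurable]: "r \<in> borel_measurable borel"
    unfolding r_def L1_dist_def by measurable
  have "(\<integral>\<^sup>+y. r y \<partial>lborel) = L1_dist g h"
    unfolding r_def L1_dist_def
    using lborel_pair.nn_integral_snd[of "\<lambda>p. ennreal \<bar>g p - h p\<bar>"] by (simp add: lborel_prod)
  then have r_int: "(\<integral>\<^sup>+y. r y \<partial>lborel) \<le> ennreal \<delta>"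
    using h(2) by simp
  obtain T1 where "open T1" and T1: "{z. \<exists>\<epsilon>\<in>{0<..<1}. ennreal t * emeasure lborel (ball z \<epsilon>)
        < (\<integral>\<^sup>+y. indicator (ball z \<epsilon>) y * r y \<partial>lborel)} \<subseteq> T1"
    and T1_small: "emeasure lborel T1 \<le> ennreal (5 ^ DIM('b) / t) * (\<integral>\<^sup>+y. r y \<partial>lborel)"
    using maximal_function_weak_type[OF r_borel \<open>0 < t\<close>] by blast
  define T2 where "T2 = {z. 1 \<le> ennreal (1 / t) * r z}"
  have T2_small: "emeasure lborel T2 \<le> ennreal (1 / t) * (\<integral>\<^sup>+y. r y \<partial>lborel)"
    using nn_integral_Markov_inequality[of r UNIV lborel "ennreal (1 / t)"] by (simp add: T2_def)
  have T1_sets: "T1 \<in> sets lborel"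
    using \<open>open T1\<close> by simp
  have T2_sets: "T2 \<in> sets lborel"
    unfolding T2_def by measurable
  have "T1 \<union> T2 \<in> sets lborel"
    using T1_sets T2_sets by simp
  moreover have "emeasure lborel (T1 \<union> T2) \<le> ennreal e"
  proof -
    have "emeasure lborel (T1 \<union> T2) \<le> emeasure lborel T1 + emeasure lborel T2"
      using T1_sets T2_sets by (rule emeasure_subadditive)
    also have "\<dots> \<le> ennreal (5 ^ DIM('b) / t) * ennreal \<delta> + ennreal (1 / t) * ennreal \<delta>"
      using order.trans[OF T1_small mult_left_mono[OF r_int]] order.trans[OF T2_small mult_left_mono[OF r_int]]
      by (intro add_mono) auto
    also have "\<dots> = (ennreal (5 ^ DIM('b) / t) + ennreal (1 / t)) * ennreal \<delta>"
      by (rule distrib_right[symmetric])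
    also have "\<dots> = ennreal c * ennreal \<delta>"
      using \<open>0 < t\<close> unfolding c_def by (subst ennreal_plus) auto
    also have "\<dots> = ennreal e"
      using \<open>0 < c\<close> \<open>0 < \<delta>\<close> by (simp add: \<delta>_def flip: ennreal_mult)
    finally show ?thesis .
  qed
  moreover have "{z \<in> space lborel. \<not> (\<forall>\<^sub>F \<epsilon> in at_right 0.
      ball_average (\<lambda>y. L1_dist (\<lambda>x. g (x, y)) (\<lambda>x. g (x, z))) z \<epsilon> \<le> ennreal (3 * t))} \<subseteq> T1 \<union> T2"
  proof (intro subsetI, rule ccontr)
    fix z assume z: "z \<in> {z \<in> space lborel. \<not> (\<forall>\<^sub>F \<epsilon> in at_right 0.
      ball_average (\<lambda>y. L1_dist (\<lambda>x. g (x, y)) (\<lambda>x. g (x, z))) z \<epsilon> \<le> ennreal (3 * t))}"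
      and "z \<notin> T1 \<union> T2"
    have "r z = ennreal t * (ennreal (1 / t) * r z)"
      using \<open>0 < t\<close> by (simp add: mult.assoc[symmetric] ennreal_mult[symmetric])
    also have "\<dots> \<le> ennreal t * 1"
      using \<open>z \<notin> T1 \<union> T2\<close> by (intro mult_left_mono) (auto simp: T2_def)
    finally have "r z \<le> ennreal t"
      by simp
    moreover have "(\<integral>\<^sup>+y. indicator (ball z \<epsilon>) y * r y \<partial>lborel) \<le> ennreal t * emeasure lborel (ball z \<epsilon>)"
      if "\<epsilon> \<in> {0<..<1}" for \<epsilon>
    proof (rule ccontr)
      assume "\<not> ?thesis"
      then have "z \<in> {z. \<exists>\<epsilon>\<in>{0<..<1}. ennreal t * emeasure lborel (ball z \<epsilon>)
          < (\<integral>\<^sup>+y. indicator (ball z \<epsilon>) y * r y \<partial>lborel)}"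
        using that by (auto simp: not_le)
      then show False
        using T1 \<open>z \<notin> T1 \<union> T2\<close> by blast
    qed
    ultimately show False
      using z slice_oscillation_eventually_le[OF _ h(1) \<open>0 < t\<close>, where z=z] by (simp add: r_def)
  qed
  ultimately show "\<exists>T\<in>sets lborel. {z \<in> space lborel. \<not> (\<forall>\<^sub>F \<epsilon> in at_right 0.
      ball_average (\<lambda>y. L1_dist (\<lambda>x. g (x, y)) (\<lambda>x. g (x, z))) z \<epsilon> \<le> ennreal (3 * t))} \<subseteq> T
      \<and> emeasure lborel T \<le> ennreal e"
    by blast
qed

lemma AE_slice_L1_lebesgue_point:
  fixes g :: "'a::euclidean_space \<times> 'b::euclidean_space \<Rightarrow> real"
  assumes [measurable]: "g \<in> borel_measurable borel" and "\<And>p. 0 \<le> g p"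
    and "\<And>p. p \<notin> ball 0 R \<Longrightarrow> g p = 0" and "(\<integral>\<^sup>+p. ennreal (g p) \<partial>lborel) < \<infinity>"
  shows "AE z in lborel.
    ((\<lambda>\<epsilon>. ball_average (\<lambda>y. L1_dist (\<lambda>x. g (x, y)) (\<lambda>x. g (x, z))) z \<epsilon>) \<longlongrightarrow> 0) (at_right 0)"
proof -
  have approx: "Cc_approximable R g"
    using assms by (rule Cc_approximable_integrable)
  have "AE z in lborel. \<forall>\<^sub>F \<epsilon> in at_right 0.
      ball_average (\<lambda>y. L1_dist (\<lambda>x. g (x, y)) (\<lambda>x. g (x, z))) z \<epsilon> \<le> ennreal (1 / Suc n)" for n
  proof -
    have eq: "3 * (1 / (3 * real (Suc n))) = 1 / real (Suc n)"
      by (simp add: field_simps)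
    show ?thesis
      using AE_slice_oscillation_le[OF assms(1) approx, of "1 / (3 * real (Suc n))"] unfolding eq by simp
  qed
  then have "AE z in lborel. \<forall>n. \<forall>\<^sub>F \<epsilon> in at_right 0.
      ball_average (\<lambda>y. L1_dist (\<lambda>x. g (x, y)) (\<lambda>x. g (x, z))) z \<epsilon> \<le> ennreal (1 / Suc n)"
    unfolding AE_all_countable ..
  then show ?thesis
    by eventually_elim (rule tendsto_zero_ennreal_if_eventually_le, simp)
qed

lemma ediff_eq_abs_enn2real:
  assumes "a \<noteq> \<infinity>" "b \<noteq> \<infinity>"
  shows "ediff a b = ennreal \<bar>enn2real a - enn2real b\<bar>"
  using assms by (cases a; cases b) (auto simp: ediff_def ennreal_minus ennreal_neg abs_if)

lemma borel_measurable_ediff [measurable (raw)]: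
  assumes [measurable]: "f \<in> borel_measurable M" "g \<in> borel_measurable M"
  shows "(\<lambda>x. ediff (f x) (g x)) \<in> borel_measurable M"
  unfolding ediff_def by measurable

lemma nn_integral_ediff_eq_L1_dist:
  fixes f g :: "'a::euclidean_space \<Rightarrow> ennreal"
  assumes [measurable]: "f \<in> borel_measurable borel" "g \<in> borel_measurable borel" "K \<in> sets borel"
    and "(\<integral>\<^sup>+x. indicator K x * f x \<partial>lborel) < \<infinity>" "(\<integral>\<^sup>+x. indicator K x * g x \<partial>lborel) < \<infinity>"
  shows "(\<integral>\<^sup>+x. indicator K x * ediff (f x) (g x) \<partial>lborel)
    = L1_dist (\<lambda>x. indicator K x * enn2real (f x)) (\<lambda>x. indicator K x * enn2real (g x))"
proof -
  have mf: "(\<lambda>x. indicator K x * f x) \<in> borel_measurable lborel"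
    by (simp add: assms)
  have mg: "(\<lambda>x. indicator K x * g x) \<in> borel_measurable lborel"
    by (simp add: assms)
  have "AE x in lborel. indicator K x * f x \<noteq> \<infinity>"
    using assms(4) by (intro nn_integral_PInf_AE[OF mf]) simp
  moreover have "AE x in lborel. indicator K x * g x \<noteq> \<infinity>"
    using assms(5) by (intro nn_integral_PInf_AE[OF mg]) simp
  ultimately show ?thesis
    unfolding L1_dist_def
    by (intro nn_integral_cong_AE, eventually_elim) (auto simp: ediff_eq_abs_enn2real split: split_indicator)
qed

definition slice_lebesgue_point :: "('a::euclidean_space \<times> 'b::euclidean_space \<Rightarrow> ennreal) \<Rightarrow> 'a set \<Rightarrow> 'b \<Rightarrow> bool" where
  "slice_lebesgue_point F K z \<longleftrightarrow>
    (\<integral>\<^sup>+x. indicator K x * F (x, z) \<partial>lborel) < \<infinity> \<and>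
    ((\<lambda>\<epsilon>. ball_average (\<lambda>y. \<integral>\<^sup>+x. indicator K x * ediff (F (x, y)) (F (x, z)) \<partial>lborel) z \<epsilon>)
      \<longlongrightarrow> 0) (at_right 0)"

lemma AE_slice_lebesgue_point:
  fixes F :: "'a::euclidean_space \<times> 'b::euclidean_space \<Rightarrow> ennreal"
  assumes [measurable]: "F \<in> borel_measurable borel" and "compact K" "compact L"
    and F_int: "(\<integral>\<^sup>+p. indicator (K \<times> L) p * F p \<partial>lborel) < \<infinity>"
  shows "AE z in lborel. z \<in> interior L \<longrightarrow> slice_lebesgue_point F K z"
proof -
  have [measurable]: "K \<in> sets borel" "L \<in> sets borel" "K \<times> L \<in> sets borel"
    using \<open>compact K\<close> \<open>compact L\<close> by (simp_all add: borel_compact compact_Times)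
  have [measurable]: "F \<in> borel_measurable (lborel \<Otimes>\<^sub>M lborel)"
    by (simp add: lborel_prod)
  define g where "g p = indicator (K \<times> L) p * enn2real (F p)" for p
  have [measurable]: "g \<in> borel_measurable borel"
    unfolding g_def by measurable
  obtain R where R: "K \<times> L \<subseteq> ball 0 R"
    using bounded_subset_ballD[OF compact_imp_bounded[OF compact_Times[OF assms(2,3)]], of 0] by blast
  have g_supp: "g p = 0" if "p \<notin> ball 0 R" for p
    using R that unfolding g_def by (auto split: split_indicator)
  have "(\<integral>\<^sup>+p. ennreal (g p) \<partial>lborel) \<le> (\<integral>\<^sup>+p. indicator (K \<times> L) p * F p \<partial>lborel)"
    by (intro nn_integral_mono) (simp add: g_def indicator_def ennreal_enn2real_if)
  then have g_point: "AE z in lborel. ((\<lambda>\<epsilon>. ball_average (\<lambda>y. L1_dist (\<lambda>x. g (x, y)) (\<lambda>x. g (x, z))) z \<epsilon>) \<longlongrightarrow> 0) (at_right 0)"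
    using F_int g_supp by (intro AE_slice_L1_lebesgue_point[where R=R]) (auto simp: g_def)
  have "(\<integral>\<^sup>+y. (\<integral>\<^sup>+x. indicator (K \<times> L) (x, y) * F (x, y) \<partial>lborel) \<partial>lborel) \<noteq> \<infinity>"
    using F_int lborel_pair.nn_integral_snd[of "\<lambda>p. indicator (K \<times> L) p * F p"] by (simp add: lborel_prod)
  then have "AE y in lborel. (\<integral>\<^sup>+x. indicator (K \<times> L) (x, y) * F (x, y) \<partial>lborel) \<noteq> \<infinity>"
    by (intro nn_integral_PInf_AE) measurable
  then have slice_fin: "AE y in lborel. y \<in> L \<longrightarrow> (\<integral>\<^sup>+x. indicator K x * F (x, y) \<partial>lborel) < \<infinity>"
    by eventually_elim (auto simp: indicator_def less_top)
  show ?thesis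
    using g_point slice_fin
  proof eventually_elim
    case (elim z)
    show ?case
    proof
      assume "z \<in> interior L"
      then obtain \<epsilon>0 where "0 < \<epsilon>0" "ball z \<epsilon>0 \<subseteq> L"
        by (meson mem_interior)
      then have "z \<in> L"
        by auto
      then have fin_z: "(\<integral>\<^sup>+x. indicator K x * F (x, z) \<partial>lborel) < \<infinity>"
        using elim(2) by blast
      have g_slice: "L1_dist (\<lambda>x. g (x, y)) (\<lambda>x. g (x, z))
          = L1_dist (\<lambda>x. indicator K x * enn2real (F (x, y))) (\<lambda>x. indicator K x * enn2real (F (x, z)))"
        if "y \<in> L" for y
        using that \<open>z \<in> L\<close> by (simp add: g_def indicator_def)
      have "ball_average (\<lambda>y. \<integral>\<^sup>+x. indicator K x * ediff (F (x, y)) (F (x, z)) \<partial>lborel) z \<epsilon>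
          \<le> ball_average (\<lambda>y. L1_dist (\<lambda>x. g (x, y)) (\<lambda>x. g (x, z))) z \<epsilon>" if "\<epsilon> \<le> \<epsilon>0" for \<epsilon>
        using slice_fin
      proof (intro ball_average_mono_AE, eventually_elim, intro impI)
        fix y assume "y \<in> L \<longrightarrow> (\<integral>\<^sup>+x. indicator K x * F (x, y) \<partial>lborel) < \<infinity>" "y \<in> ball z \<epsilon>"
        moreover have "y \<in> L"
          using \<open>y \<in> ball z \<epsilon>\<close> \<open>ball z \<epsilon>0 \<subseteq> L\<close> that by auto
        ultimately show "(\<integral>\<^sup>+x. indicator K x * ediff (F (x, y)) (F (x, z)) \<partial>lborel)
            \<le> L1_dist (\<lambda>x. g (x, y)) (\<lambda>x. g (x, z))"
          using fin_z by (simp add: g_slice nn_integral_ediff_eq_L1_dist)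
      qed
      then have "\<forall>\<^sub>F \<epsilon> in at_right 0.
          ball_average (\<lambda>y. \<integral>\<^sup>+x. indicator K x * ediff (F (x, y)) (F (x, z)) \<partial>lborel) z \<epsilon>
          \<le> ball_average (\<lambda>y. L1_dist (\<lambda>x. g (x, y)) (\<lambda>x. g (x, z))) z \<epsilon>"
        using \<open>0 < \<epsilon>0\<close> unfolding eventually_at_right_field by (intro exI[of _ \<epsilon>0]) auto
      then have "((\<lambda>\<epsilon>. ball_average (\<lambda>y. \<integral>\<^sup>+x. indicator K x * ediff (F (x, y)) (F (x, z)) \<partial>lborel) z \<epsilon>)
          \<longlongrightarrow> 0) (at_right 0)"
        by (intro tendsto_sandwich[OF _ _ tendsto_const elim(1)]) auto
      with fin_z show "slice_lebesgue_point F K z"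
        unfolding slice_lebesgue_point_def ..
    qed
  qed
qed

lemma slice_lebesgue_point_weighted:
  fixes F G :: "'a::euclidean_space \<times> 'b::euclidean_space \<Rightarrow> ennreal" and P :: "'a \<times> 'b \<Rightarrow> real"
  assumes [measurable]: "F \<in> borel_measurable borel" "K \<in> sets borel"
    and "V \<subseteq> K" "0 < r" "ball z r \<subseteq> L"
    and P_le: "\<And>x y. x \<in> V \<Longrightarrow> y \<in> L \<Longrightarrow> P (x, y) \<le> M"
    and G_eq: "\<And>x y. x \<in> K \<Longrightarrow> y \<in> L \<Longrightarrow> G (x, y) = F (x, y)"
    and "slice_lebesgue_point F K z"
  shows "(\<integral>\<^sup>+x. indicator V x * ennreal (P (x, z)) * G (x, z) \<partial>lborel) < \<infinity>"
    and "((\<lambda>\<epsilon>. ball_average (\<lambda>y. \<integral>\<^sup>+x. indicator V x * ennreal (P (x, y)) * ediff (G (x, y)) (G (x, z)) \<partial>lborel) z \<epsilon>)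
      \<longlongrightarrow> 0) (at_right 0)"
proof -
  have [measurable]: "F \<in> borel_measurable (lborel \<Otimes>\<^sub>M lborel)"
    by (simp add: lborel_prod)
  have fin: "(\<integral>\<^sup>+x. indicator K x * F (x, z) \<partial>lborel) < \<infinity>"
    and lim: "((\<lambda>\<epsilon>. ball_average (\<lambda>y. \<integral>\<^sup>+x. indicator K x * ediff (F (x, y)) (F (x, z)) \<partial>lborel) z \<epsilon>)
      \<longlongrightarrow> 0) (at_right 0)"
    using \<open>slice_lebesgue_point F K z\<close> unfolding slice_lebesgue_point_def by blast+
  have "z \<in> L"
    using \<open>0 < r\<close> \<open>ball z r \<subseteq> L\<close> by auto
  have weight: "indicator V x * ennreal (P (x, y)) * H (G (x, y)) (G (x, z))
      \<le> ennreal M * (indicator K x * H (F (x, y)) (F (x, z)))" if "y \<in> L" for x y H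
  proof (cases "x \<in> V")
    case True
    then have "x \<in> K"
      using \<open>V \<subseteq> K\<close> by auto
    then show ?thesis
      using True that \<open>z \<in> L\<close> P_le G_eq by (auto intro!: mult_right_mono ennreal_leI)
  qed simp
  have "(\<integral>\<^sup>+x. indicator V x * ennreal (P (x, z)) * G (x, z) \<partial>lborel)
      \<le> (\<integral>\<^sup>+x. ennreal M * (indicator K x * F (x, z)) \<partial>lborel)"
    using weight[OF \<open>z \<in> L\<close>, of _ "\<lambda>a b. b"] by (intro nn_integral_mono) simp
  also have "\<dots> = ennreal M * (\<integral>\<^sup>+x. indicator K x * F (x, z) \<partial>lborel)"
    by (rule nn_integral_cmult) measurable
  also have "\<dots> < \<infinity>"
    using fin by (simp add: ennreal_mult_less_top)
  finally show "(\<integral>\<^sup>+x. indicator V x * ennreal (P (x, z)) * G (x, z) \<partial>lborel) < \<infinity>" .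
  have "ball_average (\<lambda>y. \<integral>\<^sup>+x. indicator V x * ennreal (P (x, y)) * ediff (G (x, y)) (G (x, z)) \<partial>lborel) z \<epsilon>
      \<le> ennreal M * ball_average (\<lambda>y. \<integral>\<^sup>+x. indicator K x * ediff (F (x, y)) (F (x, z)) \<partial>lborel) z \<epsilon>"
    if "\<epsilon> < r" for \<epsilon>
  proof -
    have "ball_average (\<lambda>y. \<integral>\<^sup>+x. indicator V x * ennreal (P (x, y)) * ediff (G (x, y)) (G (x, z)) \<partial>lborel) z \<epsilon>
      \<le> ball_average (\<lambda>y. ennreal M * (\<integral>\<^sup>+x. indicator K x * ediff (F (x, y)) (F (x, z)) \<partial>lborel)) z \<epsilon>"
    proof (intro ball_average_mono_AE AE_I2 impI)
      fix y assume "y \<in> ball z \<epsilon>"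
      then have "y \<in> L"
        using that \<open>ball z r \<subseteq> L\<close> by auto
      have "(\<integral>\<^sup>+x. indicator V x * ennreal (P (x, y)) * ediff (G (x, y)) (G (x, z)) \<partial>lborel)
          \<le> (\<integral>\<^sup>+x. ennreal M * (indicator K x * ediff (F (x, y)) (F (x, z))) \<partial>lborel)"
        using weight[OF \<open>y \<in> L\<close>, of _ ediff] by (intro nn_integral_mono) simp
      also have "\<dots> = ennreal M * (\<integral>\<^sup>+x. indicator K x * ediff (F (x, y)) (F (x, z)) \<partial>lborel)"
        by (rule nn_integral_cmult) measurable
      finally show "(\<integral>\<^sup>+x. indicator V x * ennreal (P (x, y)) * ediff (G (x, y)) (G (x, z)) \<partial>lborel)
          \<le> ennreal M * (\<integral>\<^sup>+x. indicator K x * ediff (F (x, y)) (F (x, z)) \<partial>lborel)" .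
    qed
    also have "\<dots> = ennreal M * ball_average (\<lambda>y. \<integral>\<^sup>+x. indicator K x * ediff (F (x, y)) (F (x, z)) \<partial>lborel) z \<epsilon>"
      by (rule ball_average_cmult) measurable
    finally show ?thesis .
  qed
  then have upper: "\<forall>\<^sub>F \<epsilon> in at_right 0.
      ball_average (\<lambda>y. \<integral>\<^sup>+x. indicator V x * ennreal (P (x, y)) * ediff (G (x, y)) (G (x, z)) \<partial>lborel) z \<epsilon>
      \<le> ennreal M * ball_average (\<lambda>y. \<integral>\<^sup>+x. indicator K x * ediff (F (x, y)) (F (x, z)) \<partial>lborel) z \<epsilon>"
    using \<open>0 < r\<close> unfolding eventually_at_right_field by (intro exI[of _ r]) auto
  have upper_lim: "((\<lambda>\<epsilon>. ennreal M * ball_average (\<lambda>y. \<integral>\<^sup>+x. indicator K x * ediff (F (x, y)) (F (x, z)) \<partial>lborel) z \<epsilon>)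
      \<longlongrightarrow> 0) (at_right 0)"
    using ennreal_tendsto_cmult[OF ennreal_less_top lim, of M] by (simp only: mult_zero_right)
  show "((\<lambda>\<epsilon>. ball_average (\<lambda>y. \<integral>\<^sup>+x. indicator V x * ennreal (P (x, y)) * ediff (G (x, y)) (G (x, z)) \<partial>lborel) z \<epsilon>)
      \<longlongrightarrow> 0) (at_right 0)"
    by (rule tendsto_sandwich[OF _ upper tendsto_const upper_lim]) simp
qed

lemma weighted_slice_lebesgue_point_of_exhaustion:
  fixes F G :: "'a::euclidean_space \<times> 'b::euclidean_space \<Rightarrow> ennreal" and P :: "'a \<times> 'b \<Rightarrow> real"
    and KU :: "nat \<Rightarrow> 'a set" and KD :: "nat \<Rightarrow> 'b set"
  assumes F_borel: "F \<in> borel_measurable borel"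
    and KU: "\<And>n. compact (KU n)" "\<And>n. KU n \<subseteq> U" "\<And>K. compact K \<Longrightarrow> K \<subseteq> U \<Longrightarrow> \<exists>N. \<forall>n\<ge>N. K \<subseteq> KU n"
    and KD: "\<And>n. compact (KD n)" "\<And>n. KD n \<subseteq> D" "\<And>K. compact K \<Longrightarrow> K \<subseteq> D \<Longrightarrow> \<exists>N. \<forall>n\<ge>N. K \<subseteq> KD n"
    and G_eq: "\<And>p. p \<in> U \<times> D \<Longrightarrow> G p = F p"
    and "open D" "z \<in> D" and good: "\<And>n. z \<in> interior (KD n) \<Longrightarrow> slice_lebesgue_point F (KU n) z"
    and "rel_compact_open V U" and P_cont: "continuous_on (closure V \<times> D) P"
  shows "(\<integral>\<^sup>+x. indicator V x * ennreal (P (x, z)) * G (x, z) \<partial>lborel) < \<infinity> \<and>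
    ((\<lambda>\<epsilon>. ball_average (\<lambda>y. \<integral>\<^sup>+x. indicator V x * ennreal (P (x, y)) * ediff (G (x, y)) (G (x, z)) \<partial>lborel) z \<epsilon>)
      \<longlongrightarrow> 0) (at_right 0)"
proof -
  have V: "compact (closure V)" "closure V \<subseteq> U"
    using \<open>rel_compact_open V U\<close> by (auto simp: rel_compact_open_def)
  obtain r where "0 < r" "cball z r \<subseteq> D"
    using \<open>open D\<close> \<open>z \<in> D\<close> open_contains_cball by blast
  obtain N1 N2 where N: "\<forall>n\<ge>N1. closure V \<subseteq> KU n" "\<forall>n\<ge>N2. cball z r \<subseteq> KD n"
    using KU(3)[OF V] KD(3)[OF compact_cball \<open>cball z r \<subseteq> D\<close>] by blast
  define n where "n = max N1 N2"
  have "closure V \<subseteq> KU n" "cball z r \<subseteq> KD n"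
    using N by (simp_all add: n_def)
  then have V_K: "V \<subseteq> KU n" and ball_K: "ball z r \<subseteq> KD n"
    using closure_subset ball_subset_cball by blast+
  have "continuous_on (closure V \<times> KD n) P"
    using KD(2) by (intro continuous_on_subset[OF P_cont]) auto
  then have "bounded (P ` (closure V \<times> KD n))"
    using V KD(1) by (intro compact_imp_bounded compact_continuous_image compact_Times)
  then obtain M where M: "\<And>q. q \<in> P ` (closure V \<times> KD n) \<Longrightarrow> norm q \<le> M"
    unfolding bounded_iff by blast
  have P_le: "P (x, y) \<le> M" if "x \<in> V" "y \<in> KD n" for x y
  proof -
    have "(x, y) \<in> closure V \<times> KD n"
      using that closure_subset by auto
    then show ?thesis
      using M[OF imageI] by fastforce
  qed
  have G_eq_K: "G (x, y) = F (x, y)" if "x \<in> KU n" "y \<in> KD n" for x y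
    using that KU(2)[of n] KD(2)[of n] by (intro G_eq) auto
  have "z \<in> interior (KD n)"
    using interior_maximal[OF ball_K open_ball] \<open>0 < r\<close> by auto
  then show ?thesis
    using slice_lebesgue_point_weighted[where G=G and P=P and M=M,
        OF F_borel borel_compact[OF KU(1)] V_K \<open>0 < r\<close> ball_K P_le G_eq_K good]
    by blast
qed

section \<open>The weight \<open>e\<^sup>-\<^sup>\<phi>\<close>\<close>

lemma expneg_borel [measurable]: "expneg \<in> borel_measurable borel"
  unfolding expneg_def by measurable

lemma usc_on_open_borel_measurable:
  fixes \<phi> :: "'a::topological_space \<Rightarrow> ereal"
  assumes "open W" "usc_on W \<phi>"
  shows "(\<lambda>p. if p \<in> W then \<phi> p else \<infinity>) \<in> borel_measurable borel"
proof (rule borel_measurableI_less)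
  fix c :: ereal
  have "open {p \<in> W. \<phi> p < c}"
  proof (rule Topological_Spaces.openI)
    fix p assume p: "p \<in> {p \<in> W. \<phi> p < c}"
    then have pW: "p \<in> W" and "\<phi> p < c"
      by auto
    then have "\<forall>\<^sub>F q in at p within W. \<phi> q < c"
      using assms(2) unfolding usc_on_def by (meson bspec spec mp)
    then have "\<forall>\<^sub>F q in at p. \<phi> q < c"
      by (simp only: at_within_open[OF pW \<open>open W\<close>])
    then obtain S where "open S" "p \<in> S" "\<And>q. q \<in> S \<Longrightarrow> q \<noteq> p \<Longrightarrow> \<phi> q < c"
      unfolding eventually_at_topological by blast
    then show "\<exists>T. open T \<and> p \<in> T \<and> T \<subseteq> {p \<in> W. \<phi> p < c}"
      using p \<open>open W\<close> by (intro exI[of _ "S \<inter> W"]) auto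
  qed
  moreover have "{p \<in> space borel. (if p \<in> W then \<phi> p else \<infinity>) < c} = {p \<in> W. \<phi> p < c}"
    by auto
  ultimately show "{p \<in> space borel. (if p \<in> W then \<phi> p else \<infinity>) < c} \<in> sets borel"
    by simp
qed

lemma multiplier_ideal_trivial_integrable_compact:
  fixes \<phi> :: "'a::euclidean_space \<Rightarrow> ereal"
  assumes ideal: "multiplier_ideal_trivial S \<phi>" and [measurable]: "F \<in> borel_measurable borel"
    and F_eq: "\<And>p. p \<in> S \<Longrightarrow> F p = expneg (\<phi> p)" and "compact Q" "Q \<subseteq> S"
  shows "(\<integral>\<^sup>+p. indicator Q p * F p \<partial>lborel) < \<infinity>"
proof -
  obtain N where N: "\<And>x. x \<in> S \<Longrightarrow> open (N x) \<and> x \<in> N x \<and> N x \<subseteq> S \<and>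
      (\<integral>\<^sup>+y. indicator (N x) y * expneg (\<phi> y) \<partial>lborel) < \<infinity>"
    using ideal unfolding multiplier_ideal_trivial_def by metis
  obtain C where "C \<subseteq> Q" "finite C" and cover: "Q \<subseteq> (\<Union>x\<in>C. N x)"
    using compactE_image[OF \<open>compact Q\<close>, of Q N] N \<open>Q \<subseteq> S\<close> by blast
  have [measurable]: "N x \<in> sets borel" if "x \<in> C" for x
    using N that \<open>C \<subseteq> Q\<close> \<open>Q \<subseteq> S\<close> by auto
  have "(\<integral>\<^sup>+p. indicator Q p * F p \<partial>lborel) \<le> (\<integral>\<^sup>+p. (\<Sum>x\<in>C. indicator (N x) p * F p) \<partial>lborel)"
  proof (intro nn_integral_mono)
    fix p
    show "indicator Q p * F p \<le> (\<Sum>x\<in>C. indicator (N x) p * F p)"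
    proof (cases "p \<in> Q")
      case True
      then obtain x where "x \<in> C" "p \<in> N x"
        using cover by blast
      then show ?thesis
        using True \<open>finite C\<close> member_le_sum[of x C "\<lambda>x. indicator (N x) p * F p"] by simp
    qed simp
  qed
  also have "\<dots> = (\<Sum>x\<in>C. (\<integral>\<^sup>+p. indicator (N x) p * F p \<partial>lborel))"
    by (intro nn_integral_sum) measurable
  also have "\<dots> = (\<Sum>x\<in>C. (\<integral>\<^sup>+p. indicator (N x) p * expneg (\<phi> p) \<partial>lborel))"
    using N F_eq \<open>C \<subseteq> Q\<close> \<open>Q \<subseteq> S\<close>
    by (intro sum.cong nn_integral_cong) (auto split: split_indicator)
  also have "\<dots> < \<infinity>"
    using N \<open>finite C\<close> \<open>C \<subseteq> Q\<close> \<open>Q \<subseteq> S\<close> by (auto simp: ennreal_sum_less_top)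
  finally show ?thesis .
qed

theorem lemma2p18:
  fixes U :: "(complex ^ 'p) set" and D :: "(complex ^ 'q) set"
    and \<phi> :: "(complex ^ 'p) \<times> (complex ^ 'q) \<Rightarrow> ereal"
  assumes U: "open U" "connected U" "U \<noteq> {}" "bounded U"
    and D: "open D" "connected D" "D \<noteq> {}" "bounded D"
    and usc: "usc_on (U \<times> D) \<phi>"
    and not_pinf: "\<forall>x\<in>U \<times> D. \<phi> x < \<infinity>"
    and ideal: "multiplier_ideal_trivial (U \<times> D) \<phi>"
  shows "AE z'' in lborel. z'' \<in> D \<longrightarrow>
    (\<forall>V (P :: (complex ^ 'p) \<times> (complex ^ 'q) \<Rightarrow> real).
       rel_compact_open V U \<and> continuous_on (closure V \<times> D) P
       \<and> (\<forall>x\<in>closure V \<times> D. 0 \<le> P x) \<longrightarrow>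
       (\<integral>\<^sup>+ w'. indicator V w' * ennreal (P (w', z'')) * expneg (\<phi> (w', z'')) \<partial>lborel) < \<infinity>
       \<and> ((\<lambda>\<epsilon>. (\<integral>\<^sup>+ w''. indicator (ball z'' \<epsilon>) w'' *
               (\<integral>\<^sup>+ w'. indicator V w' * ennreal (P (w', w'')) *
                   ediff (expneg (\<phi> (w', w''))) (expneg (\<phi> (w', z''))) \<partial>lborel) \<partial>lborel)
             / emeasure lborel (ball z'' \<epsilon>))
           \<longlongrightarrow> 0) (at_right (0::real)))"
proof -
  define F where "F p = expneg (if p \<in> U \<times> D then \<phi> p else \<infinity>)" for p
  have F_borel: "F \<in> borel_measurable borel"
    unfolding F_def
    by (rule measurable_compose[OF usc_on_open_borel_measurable[OF open_Times[OF U(1) D(1)] usc] expneg_borel])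
  have F_eq: "expneg (\<phi> p) = F p" if "p \<in> U \<times> D" for p
    using that by (simp add: F_def)
  obtain KU where KU: "\<And>n. compact (KU n)" "\<And>n. KU n \<subseteq> U"
    and "\<And>n. KU n \<subseteq> interior (KU (Suc n))" "\<Union>(range KU) = U"
    and KU_absorbs: "\<And>K. compact K \<Longrightarrow> K \<subseteq> U \<Longrightarrow> \<exists>N. \<forall>n\<ge>N. K \<subseteq> KU n"
    by (rule open_Union_compact_subsets[OF U(1)]) blast
  obtain KD where KD: "\<And>n. compact (KD n)" "\<And>n. KD n \<subseteq> D"
    and "\<And>n. KD n \<subseteq> interior (KD (Suc n))" "\<Union>(range KD) = D"
    and KD_absorbs: "\<And>K. compact K \<Longrightarrow> K \<subseteq> D \<Longrightarrow> \<exists>N. \<forall>n\<ge>N. K \<subseteq> KD n"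
    by (rule open_Union_compact_subsets[OF D(1)]) blast
  have "AE z in lborel. \<forall>n. z \<in> interior (KD n) \<longrightarrow> slice_lebesgue_point F (KU n) z"
    unfolding AE_all_countable
  proof
    fix n
    have "(\<integral>\<^sup>+p. indicator (KU n \<times> KD n) p * F p \<partial>lborel) < \<infinity>"
      using KU(1,2)[of n] KD(1,2)[of n]
      by (intro multiplier_ideal_trivial_integrable_compact[OF ideal F_borel F_eq[symmetric]])
         (auto simp: compact_Times)
    then show "AE z in lborel. z \<in> interior (KD n) \<longrightarrow> slice_lebesgue_point F (KU n) z"
      using KU(1) KD(1) by (intro AE_slice_lebesgue_point F_borel)
  qed
  then show ?thesis
  proof eventually_elim
    case (elim z)
    show ?case
    proof (intro impI allI, elim conjE)
      fix V and P :: "(complex ^ 'p) \<times> (complex ^ 'q) \<Rightarrow> real"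
      assume "z \<in> D" "rel_compact_open V U" "continuous_on (closure V \<times> D) P"
      then show "(\<integral>\<^sup>+ w'. indicator V w' * ennreal (P (w', z)) * expneg (\<phi> (w', z)) \<partial>lborel) < \<infinity>
       \<and> ((\<lambda>\<epsilon>. (\<integral>\<^sup>+ w''. indicator (ball z \<epsilon>) w'' *
               (\<integral>\<^sup>+ w'. indicator V w' * ennreal (P (w', w'')) *
                   ediff (expneg (\<phi> (w', w''))) (expneg (\<phi> (w', z))) \<partial>lborel) \<partial>lborel)
             / emeasure lborel (ball z \<epsilon>))
           \<longlongrightarrow> 0) (at_right (0::real))"
        using weighted_slice_lebesgue_point_of_exhaustion[where G="\<lambda>p. expneg (\<phi> p)" and P=P,
            OF F_borel KU KU_absorbs KD KD_absorbs F_eq D(1) _ elim[rule_format]]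
        unfolding ball_average_def by blast
    qed
  qed
qed

end
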